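(* Let $\sigma$ be an $\mathcal{L}^S(C^* )$-sentence with parameters from $M$, and let $c_{i_1j_1},\dots,c_{i_nj_n}$ be all constant symbols from $C^*$ occurring in $\sigma$, listed in strictly increasing (lexicographic) order. Let $r,s$ be positive integers with $i_n\le s$ and $j_1,\dots,j_n\le r$, and let $\kappa_1,\dots,\kappa_s$ be infinite cardinals. Suppose there are ordinals $\beta_1<\dots<\beta_s<\theta$ and sets $X_k\subseteq F^{-1}(\beta_k)$ with $|X_k|=\kappa_k$ ($1\le k\le s$) such that for all $\mathbf{a}\in[X_1]^r\times\dots\times[X_s]^r$ we have $M\models\sigma(a_{i_1j_1},\dots,a_{i_nj_n})$. Then there are subsets $Y_k\subseteq X_k$ with $|Y_k|=\kappa_k$ ($1\le k\le s$) such that for all $\mathbf{a}\in[Y_1]^r\times\dots\times[Y_s]^r$ we have $M\models\sigma(a_{k_1l_1},\dots,a_{k_nl_n})$ whenever $\langle c_{i_1j_1},\dots,c_{i_nj_n}\rangle$ and $\langle c_{k_1l_1},\dots,c_{k_nl_n}\rangle$ are equivalent and $l_1,\dots,l_n\le r$.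
   Context: $\mathcal{L}$ is a countable first-order language containing a binary symbol $<$; $\mathcal{L}^S$ is $\mathcal{L}$ with Skolem function symbols added, $T_{\mathrm{skolem}}$ the theory saying they are Skolem functions. $\theta$ is a strongly inaccessible cardinal and $M$ is a model of $T_{\mathrm{skolem}}$ whose $\mathcal{L}$-reduct is a $\theta$-like model (cardinality $\theta$, every proper initial segment of cardinality $<\theta$) of a complete $\mathcal{L}$-theory $T$ in which $<$ is a linear order. Fix a chain $\langle M_i;i<\theta\rangle$ of $\mathcal{L}^S$-elementary submodels of $M$, each a proper initial segment of $M$, with $M_j$ an elementary end extension of $M_i$ for $i<j$, $M_\delta=\bigcup_{i<\delta}M_i$ for limit $\delta<\theta$, and $M=\bigcup_{i<\theta}M_i$ (obtained by a Skolem hull argument). $F:M\to\theta$ sends $a$ to the least $i$ with $a\in M_i$. $C^*=\{c_{ij}\mid i,j<\omega\}$ are new constants. For $X\subseteq M$, $[X]^r$ is the set of strictly increasing $r$-sequences from $X$; an element $\mathbf{a}\in[X_1]^r\times\dots\times[X_s]^r$ is written $\mathbf{a}=\langle\langle a_{11},\dots,a_{1r}\rangle,\dots,\langle a_{s1},\dots,a_{sr}\rangle\rangle$. $\sigma(a_{k_1l_1},\dots,a_{k_nl_n})$ denotes the result of replacing each $c_{i_pj_p}$ in $\sigma$ by $a_{k_pl_p}$. Two strictly increasing sequences $\langle c_{i_1j_1},\dots,c_{i_nj_n}\rangle$, $\langle c_{k_1l_1},\dots,c_{k_nl_n}\rangle$ are equivalent iff $i_p=k_p$ for $p=1,\dots,n$.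 *)

theory Defs
  imports Main "HOL-Library.Countable_Set"
begin

text \<open>Terms over function symbols 'f (the symbols of L^S, Skolem symbols included),
  with variables, parameters from the model (elements of type 'm), and the new
  constants c_ij of C* (CC i j).\<close>

datatype ('f, 'm) trm =
    Var nat
  | Par 'm
  | CC nat nat
  | App 'f "('f, 'm) trm list"

datatype ('f, 'p, 'm) fm =
    FF
  | Eq "('f, 'm) trm" "('f, 'm) trm"
  | Rel 'p "('f, 'm) trm list"
  | Neg "('f, 'p, 'm) fm"
  | Conj "('f, 'p, 'm) fm" "('f, 'p, 'm) fm"
  | Ex nat "('f, 'p, 'm) fm"

fun eval :: "('f \<Rightarrow> 'm list \<Rightarrow> 'm) \<Rightarrow> (nat \<Rightarrow> 'm) \<Rightarrow> ('f, 'm) trm \<Rightarrow> 'm" where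
  "eval fs e (Var x) = e x"
| "eval fs e (Par a) = a"
| "eval fs e (CC i j) = undefined"
| "eval fs e (App f ts) = fs f (map (eval fs e) ts)"

fun sat :: "'m set \<Rightarrow> ('f \<Rightarrow> 'm list \<Rightarrow> 'm) \<Rightarrow> ('p \<Rightarrow> 'm list \<Rightarrow> bool)
            \<Rightarrow> (nat \<Rightarrow> 'm) \<Rightarrow> ('f, 'p, 'm) fm \<Rightarrow> bool" where
  "sat D fs rs e FF = False"
| "sat D fs rs e (Eq t u) = (eval fs e t = eval fs e u)"
| "sat D fs rs e (Rel p ts) = rs p (map (eval fs e) ts)"
| "sat D fs rs e (Neg \<phi>) = (\<not> sat D fs rs e \<phi>)"
| "sat D fs rs e (Conj \<phi> \<psi>) = (sat D fs rs e \<phi> \<and> sat D fs rs e \<psi>)"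
| "sat D fs rs e (Ex x \<phi>) = (\<exists>a\<in>D. sat D fs rs (e(x := a)) \<phi>)"

fun trm_vars :: "('f, 'm) trm \<Rightarrow> nat set" where
  "trm_vars (Var x) = {x}"
| "trm_vars (Par a) = {}"
| "trm_vars (CC i j) = {}"
| "trm_vars (App f ts) = (\<Union>t\<in>set ts. trm_vars t)"

fun fv :: "('f, 'p, 'm) fm \<Rightarrow> nat set" where
  "fv FF = {}"
| "fv (Eq t u) = trm_vars t \<union> trm_vars u"
| "fv (Rel p ts) = (\<Union>t\<in>set ts. trm_vars t)"
| "fv (Neg \<phi>) = fv \<phi>"
| "fv (Conj \<phi> \<psi>) = fv \<phi> \<union> fv \<psi>"
| "fv (Ex x \<phi>) = fv \<phi> - {x}"

fun trm_cc :: "('f, 'm) trm \<Rightarrow> (nat \<times> nat) set" where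
  "trm_cc (Var x) = {}"
| "trm_cc (Par a) = {}"
| "trm_cc (CC i j) = {(i, j)}"
| "trm_cc (App f ts) = (\<Union>t\<in>set ts. trm_cc t)"

fun fm_cc :: "('f, 'p, 'm) fm \<Rightarrow> (nat \<times> nat) set" where
  "fm_cc FF = {}"
| "fm_cc (Eq t u) = trm_cc t \<union> trm_cc u"
| "fm_cc (Rel p ts) = (\<Union>t\<in>set ts. trm_cc t)"
| "fm_cc (Neg \<phi>) = fm_cc \<phi>"
| "fm_cc (Conj \<phi> \<psi>) = fm_cc \<phi> \<union> fm_cc \<psi>"
| "fm_cc (Ex x \<phi>) = fm_cc \<phi>"

fun trm_pars :: "('f, 'm) trm \<Rightarrow> 'm set" where
  "trm_pars (Var x) = {}"
| "trm_pars (Par a) = {a}"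
| "trm_pars (CC i j) = {}"
| "trm_pars (App f ts) = (\<Union>t\<in>set ts. trm_pars t)"

fun fm_pars :: "('f, 'p, 'm) fm \<Rightarrow> 'm set" where
  "fm_pars FF = {}"
| "fm_pars (Eq t u) = trm_pars t \<union> trm_pars u"
| "fm_pars (Rel p ts) = (\<Union>t\<in>set ts. trm_pars t)"
| "fm_pars (Neg \<phi>) = fm_pars \<phi>"
| "fm_pars (Conj \<phi> \<psi>) = fm_pars \<phi> \<union> fm_pars \<psi>"
| "fm_pars (Ex x \<phi>) = fm_pars \<phi>"

definition pure :: "('f, 'p, 'm) fm \<Rightarrow> bool" where
  "pure \<phi> \<longleftrightarrow> fm_pars \<phi> = {} \<and> fm_cc \<phi> = {}"

fun trm_subst :: "(nat \<times> nat \<Rightarrow> 'm) \<Rightarrow> ('f, 'm) trm \<Rightarrow> ('f, 'm) trm" where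
  "trm_subst g (Var x) = Var x"
| "trm_subst g (Par a) = Par a"
| "trm_subst g (CC i j) = Par (g (i, j))"
| "trm_subst g (App f ts) = App f (map (trm_subst g) ts)"

fun fm_subst :: "(nat \<times> nat \<Rightarrow> 'm) \<Rightarrow> ('f, 'p, 'm) fm \<Rightarrow> ('f, 'p, 'm) fm" where
  "fm_subst g FF = FF"
| "fm_subst g (Eq t u) = Eq (trm_subst g t) (trm_subst g u)"
| "fm_subst g (Rel p ts) = Rel p (map (trm_subst g) ts)"
| "fm_subst g (Neg \<phi>) = Neg (fm_subst g \<phi>)"
| "fm_subst g (Conj \<phi> \<psi>) = Conj (fm_subst g \<phi>) (fm_subst g \<psi>)"
| "fm_subst g (Ex x \<phi>) = Ex x (fm_subst g \<phi>)"

text \<open>sigma(b_1,...,b_n): the p-th listed constant cs!p is replaced by bs!p.\<close>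
definition inst :: "('f, 'p, 'm) fm \<Rightarrow> (nat \<times> nat) list \<Rightarrow> 'm list \<Rightarrow> ('f, 'p, 'm) fm" where
  "inst \<sigma> cs bs = fm_subst (\<lambda>ij. the (map_of (zip cs bs) ij)) \<sigma>"

text \<open>M |= phi for a sentence phi (universe of M = UNIV).\<close>
definition models :: "('f \<Rightarrow> 'm list \<Rightarrow> 'm) \<Rightarrow> ('p \<Rightarrow> 'm list \<Rightarrow> bool) \<Rightarrow> ('f, 'p, 'm) fm \<Rightarrow> bool" where
  "models fs rs \<phi> \<longleftrightarrow> sat UNIV fs rs (\<lambda>_. undefined) \<phi>"

definition lex_less :: "nat \<times> nat \<Rightarrow> nat \<times> nat \<Rightarrow> bool" where
  "lex_less p q \<longleftrightarrow> fst p < fst q \<or> (fst p = fst q \<and> snd p < snd q)"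

definition strict_linear :: "('m \<Rightarrow> 'm \<Rightarrow> bool) \<Rightarrow> bool" where
  "strict_linear lt \<longleftrightarrow> (\<forall>x. \<not> lt x x) \<and> (\<forall>x y z. lt x y \<longrightarrow> lt y z \<longrightarrow> lt x z)
      \<and> (\<forall>x y. lt x y \<or> x = y \<or> lt y x)"

definition initial_seg_of :: "('m \<Rightarrow> 'm \<Rightarrow> bool) \<Rightarrow> 'm set \<Rightarrow> 'm set \<Rightarrow> bool" where
  "initial_seg_of lt A B \<longleftrightarrow> A \<subseteq> B \<and> (\<forall>x\<in>B. \<forall>y\<in>A. lt x y \<longrightarrow> x \<in> A)"

definition elem_sub :: "('f \<Rightarrow> 'm list \<Rightarrow> 'm) \<Rightarrow> ('p \<Rightarrow> 'm list \<Rightarrow> bool) \<Rightarrow> 'm set \<Rightarrow> 'm set \<Rightarrow> bool" where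
  "elem_sub fs rs N N' \<longleftrightarrow> N \<noteq> {} \<and> N \<subseteq> N'
     \<and> (\<forall>f xs. set xs \<subseteq> N \<longrightarrow> fs f xs \<in> N)
     \<and> (\<forall>(\<phi> :: ('f, 'p, 'm) fm) e. pure \<phi> \<longrightarrow> range e \<subseteq> N \<longrightarrow>
            (sat N fs rs e \<phi> \<longleftrightarrow> sat N' fs rs e \<phi>))"

text \<open>The structure (universe UNIV) is a model of T_skolem: sk n phi is the Skolem
  function symbol (of arity n) for the L^S-formula phi(x_0; x_1..x_n).  The function
  symbols of L^S are those of L together with the Skolem symbols sk n phi.\<close>
definition skolem_model :: "('f \<Rightarrow> 'm list \<Rightarrow> 'm) \<Rightarrow> ('p \<Rightarrow> 'm list \<Rightarrow> bool)
      \<Rightarrow> (nat \<Rightarrow> ('f, 'p, 'm) fm \<Rightarrow> 'f) \<Rightarrow> bool" where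
  "skolem_model fs rs sk \<longleftrightarrow>
     (\<forall>n n' \<phi> \<phi>'. pure \<phi> \<longrightarrow> pure \<phi>' \<longrightarrow> fv \<phi> \<subseteq> {0..n} \<longrightarrow> fv \<phi>' \<subseteq> {0..n'} \<longrightarrow>
         sk n \<phi> = sk n' \<phi>' \<longrightarrow> n = n' \<and> \<phi> = \<phi>')
   \<and> (\<forall>n \<phi> e. pure \<phi> \<longrightarrow> fv \<phi> \<subseteq> {0..n} \<longrightarrow>
         (\<exists>a. sat UNIV fs rs (e(0 := a)) \<phi>) \<longrightarrow>
         sat UNIV fs rs (e(0 := fs (sk n \<phi>) (map e [1..<Suc n]))) \<phi>)"

text \<open>The ordinal theta is represented by the well-ordered type 'o (theta = its order
  type, the ordinals below theta being the elements of 'o).  theta is strongly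
  inaccessible: an uncountable regular strong limit cardinal.\<close>
definition strongly_inaccessible_type :: "'o::wellorder itself \<Rightarrow> bool" where
  "strongly_inaccessible_type _ \<longleftrightarrow>
     \<not> countable (UNIV :: 'o set)
   \<and> (\<forall>i::'o. ordLess2 (card_of {j. j < i}) (card_of (UNIV :: 'o set)))
   \<and> (\<forall>A::'o set. ordLess2 (card_of A) (card_of (UNIV :: 'o set)) \<longrightarrow> (\<exists>i. \<forall>a\<in>A. a < i))
   \<and> (\<forall>i::'o. ordLess2 (card_of (Pow {j. j < i})) (card_of (UNIV :: 'o set)))"

definition limit_ord :: "'o::wellorder \<Rightarrow> bool" where
  "limit_ord \<delta> \<longleftrightarrow> (\<exists>i. i < \<delta>) \<and> (\<forall>i < \<delta>. \<exists>j. i < j \<and> j < \<delta>)"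

text \<open>The standing setting: M (universe UNIV :: 'm set, functions fs, relations rs,
  the binary relation symbol lsym interpreting <) is a model of T_skolem whose L-reduct
  is a theta-like linear order; Mc is the chain of L^S-elementary submodels.\<close>
definition standing_setting ::
  "('f \<Rightarrow> 'm list \<Rightarrow> 'm) \<Rightarrow> ('p \<Rightarrow> 'm list \<Rightarrow> bool) \<Rightarrow> 'p
   \<Rightarrow> (nat \<Rightarrow> ('f, 'p, 'm) fm \<Rightarrow> 'f) \<Rightarrow> ('o::wellorder \<Rightarrow> 'm set) \<Rightarrow> bool" where
  "standing_setting fs rs lsym sk Mc \<longleftrightarrow>
     countable (UNIV :: 'f set) \<and> countable (UNIV :: 'p set)
   \<and> skolem_model fs rs sk
   \<and> strongly_inaccessible_type TYPE('o)
   \<and> strict_linear (\<lambda>x y. rs lsym [x, y])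
   \<and> ordIso2 (card_of (UNIV :: 'm set)) (card_of (UNIV :: 'o set))
   \<and> (\<forall>I. I \<noteq> UNIV \<longrightarrow> initial_seg_of (\<lambda>x y. rs lsym [x, y]) I UNIV \<longrightarrow>
          ordLess2 (card_of I) (card_of (UNIV :: 'o set)))
   \<and> (\<forall>i. elem_sub fs rs (Mc i) UNIV \<and> Mc i \<noteq> UNIV
          \<and> initial_seg_of (\<lambda>x y. rs lsym [x, y]) (Mc i) UNIV)
   \<and> (\<forall>i j. i < j \<longrightarrow> elem_sub fs rs (Mc i) (Mc j)
          \<and> initial_seg_of (\<lambda>x y. rs lsym [x, y]) (Mc i) (Mc j))
   \<and> (\<forall>\<delta>. limit_ord \<delta> \<longrightarrow> Mc \<delta> = (\<Union>i\<in>{i. i < \<delta>}. Mc i))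
   \<and> (\<Union>i. Mc i) = UNIV"

definition Fidx :: "('o::wellorder \<Rightarrow> 'm set) \<Rightarrow> 'm \<Rightarrow> 'o" where
  "Fidx Mc a = (LEAST i. a \<in> Mc i)"

text \<open>a in [X_1]^r x ... x [X_s]^r, with a k l = a_{kl} (1 \<le> k \<le> s, 1 \<le> l \<le> r).\<close>
definition in_prod :: "('m \<Rightarrow> 'm \<Rightarrow> bool) \<Rightarrow> nat \<Rightarrow> nat \<Rightarrow> (nat \<Rightarrow> 'm set) \<Rightarrow> (nat \<Rightarrow> nat \<Rightarrow> 'm) \<Rightarrow> bool" where
  "in_prod lt r s X a \<longleftrightarrow>
     (\<forall>k\<in>{1..s}. (\<forall>l\<in>{1..r}. a k l \<in> X k) \<and> (\<forall>l\<in>{1..r}. \<forall>l'\<in>{1..r}. l < l' \<longrightarrow> lt (a k l) (a k l')))"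

end

theory Submission
  imports Defs
begin

text \<open>Choose each \<open>Y\<^sub>k\<close> spaced in \<open>X\<^sub>k\<close>: at least \<open>r\<close> elements of \<open>X\<^sub>k\<close> lie below
  and above every element of \<open>Y\<^sub>k\<close> and between any two of them.  A maximal such set (Zorn) is
  as large as \<open>X\<^sub>k\<close>, because only finitely many elements of \<open>X\<^sub>k\<close> are crowded towards any
  given point or towards the ends.  Now let \<open>a\<close> be increasing tuples from the \<open>Y\<^sub>k\<close> and let
  the second indices of the constants be changed keeping the lexicographic order.  Within each
  block \<open>k\<close> the values then still come in increasing order, so, filling the positions
  \<open>1, \<dots>, r\<close> from left to right, they extend to an increasing \<open>r\<close>-tuple from \<open>X\<^sub>k\<close> in
  which they occupy the original positions; the hypothesis for these tuples is the required
  instance.\<close>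

section \<open>Room between elements of a linear order\<close>

definition between :: "('m \<Rightarrow> 'm \<Rightarrow> bool) \<Rightarrow> 'm set \<Rightarrow> 'm option \<Rightarrow> 'm option \<Rightarrow> 'm set" where
  "between lt X lo hi = {x \<in> X. pred_option (\<lambda>a. lt a x) lo \<and> pred_option (\<lambda>b. lt x b) hi}"

definition has_room :: "('m \<Rightarrow> 'm \<Rightarrow> bool) \<Rightarrow> 'm set \<Rightarrow> 'm option \<Rightarrow> 'm option \<Rightarrow> nat \<Rightarrow> bool" where
  "has_room lt X lo hi d \<longleftrightarrow> (\<exists>S \<subseteq> between lt X lo hi. finite S \<and> card S = d)"

lemma
  assumes "strict_linear lt"
  shows strict_linear_irrefl: "\<not> lt x x"
    and strict_linear_trans: "lt x y \<Longrightarrow> lt y z \<Longrightarrow> lt x z"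
    and strict_linear_total: "x \<noteq> y \<Longrightarrow> lt x y \<or> lt y x"
  using assms unfolding strict_linear_def by blast+

lemma strict_linear_conversep: "strict_linear lt \<Longrightarrow> strict_linear (conversep lt)"
  unfolding strict_linear_def conversep_iff by blast

lemma between_conversep: "between (conversep lt) X lo hi = between lt X hi lo"
  unfolding between_def conversep_iff by (intro Collect_cong) blast

lemma has_room_conversep: "has_room (conversep lt) X lo hi d \<longleftrightarrow> has_room lt X hi lo d"
  unfolding has_room_def between_conversep by (rule refl)

lemma has_room_mono:
  assumes "has_room lt X lo hi d" "d' \<le> d"
  shows "has_room lt X lo hi d'"
proof -
  from assms(1) obtain S where S: "S \<subseteq> between lt X lo hi" "finite S" "card S = d"
    unfolding has_room_def by (elim exE conjE)
  then have "d' \<le> card S"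
    using assms(2) by simp
  then obtain S' where S': "S' \<subseteq> S" "card S' = d'" "finite S'"
    by (rule obtain_subset_with_card_n)
  from S'(1) S(1) have "S' \<subseteq> between lt X lo hi"
    by (rule subset_trans)
  with S'(2,3) show ?thesis
    unfolding has_room_def by (intro exI conjI)
qed

lemma has_room_lower:
  assumes lin: "strict_linear lt" and "lt a b" "has_room lt X (Some b) hi d"
  shows "has_room lt X (Some a) hi d"
proof -
  have "lt a x" if "lt b x" for x
    using strict_linear_trans[OF lin \<open>lt a b\<close> that] .
  then have "between lt X (Some b) hi \<subseteq> between lt X (Some a) hi"
    unfolding between_def by auto
  then show ?thesis
    using assms(3) unfolding has_room_def by blast
qed

lemma has_room_unbounded:
  assumes "infinite X"
  shows "has_room lt X None None d"
proof -
  obtain S where "finite S" "card S = d" "S \<subseteq> X"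
    using infinite_arbitrarily_large[OF assms] by blast
  then show ?thesis
    unfolding has_room_def between_def by auto
qed

lemma strict_linear_finite_min:
  assumes lin: "strict_linear lt" and "finite S" "S \<noteq> {}"
  shows "\<exists>m\<in>S. \<forall>x\<in>S - {m}. lt m x"
  using assms(2,3)
proof (induction S rule: finite_ne_induct)
  case (singleton x)
  then show ?case by simp
next
  case (insert x S)
  then obtain m where m: "m \<in> S" "\<forall>y\<in>S - {m}. lt m y"
    by blast
  show ?case
  proof (cases "lt x m")
    case True
    have "lt x y" if "y \<in> insert x S - {x}" for y
    proof (cases "y = m")
      case False
      then show ?thesis
        using that m strict_linear_trans[OF lin True] by blast
    qed (use True in simp)
    then show ?thesis
      by blast
  next
    case False
    then have "lt m x"
      using strict_linear_total[OF lin, of x m] m(1) insert.hyps by blast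
    then show ?thesis
      using m by blast
  qed
qed

lemma has_room_above_min:
  assumes lin: "strict_linear lt"
    and S: "S \<subseteq> between lt X lo hi" "finite S" "card S = Suc d"
  shows "\<exists>v\<in>S. has_room lt X (Some v) hi d"
proof -
  have "S \<noteq> {}"
    using S(3) by auto
  then obtain m where m: "m \<in> S" "\<forall>x\<in>S - {m}. lt m x"
    using strict_linear_finite_min[OF lin S(2)] by blast
  have "S - {m} \<subseteq> between lt X (Some m) hi"
  proof
    fix x assume x: "x \<in> S - {m}"
    then have "x \<in> between lt X lo hi" "lt m x"
      using S(1) m(2) by auto
    then show "x \<in> between lt X (Some m) hi"
      by (simp add: between_def)
  qed
  moreover have "finite (S - {m})" "card (S - {m}) = d"
    using S m(1) by simp_all
  ultimately have "has_room lt X (Some m) hi d"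
    unfolding has_room_def by blast
  then show ?thesis
    using m(1) by blast
qed

lemma has_room_below_max:
  assumes "strict_linear lt"
    and "S \<subseteq> between lt X lo hi" "finite S" "card S = Suc d"
  shows "\<exists>v\<in>S. has_room lt X lo (Some v) d"
  using has_room_above_min[OF strict_linear_conversep[OF assms(1)], of S X hi lo d] assms(2-)
  by (simp add: between_conversep has_room_conversep)

lemma has_room_SucD:
  assumes lin: "strict_linear lt" and "has_room lt X lo hi (Suc d)"
  shows "\<exists>v\<in>between lt X lo hi. has_room lt X (Some v) hi d"
proof -
  obtain S where S: "S \<subseteq> between lt X lo hi" "finite S" "card S = Suc d"
    using assms(2) unfolding has_room_def by blast
  then show ?thesis
    using has_room_above_min[OF lin S] by blast
qed

lemma finite_crowded_above:
  assumes lin: "strict_linear lt"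
  shows "finite {x \<in> between lt X lo None. \<not> has_room lt X lo (Some x) r}"
proof (rule ccontr)
  assume "infinite {x \<in> between lt X lo None. \<not> has_room lt X lo (Some x) r}"
  then obtain S where "S \<subseteq> {x \<in> between lt X lo None. \<not> has_room lt X lo (Some x) r}"
      "finite S" "card S = Suc r"
    using infinite_arbitrarily_large by blast
  then show False
    using has_room_below_max[OF lin, of S X lo None r] by blast
qed

lemma finite_crowded_below:
  assumes "strict_linear lt"
  shows "finite {x \<in> between lt X None hi. \<not> has_room lt X (Some x) hi r}"
  using finite_crowded_above[OF strict_linear_conversep[OF assms], of X hi r]
  by (simp add: between_conversep has_room_conversep)

section \<open>Spaced subsets\<close>

definition spaced :: "('m \<Rightarrow> 'm \<Rightarrow> bool) \<Rightarrow> 'm set \<Rightarrow> 'm set \<Rightarrow> nat \<Rightarrow> bool" where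
  "spaced lt X Y r \<longleftrightarrow> Y \<subseteq> X
     \<and> (\<forall>y\<in>Y. has_room lt X None (Some y) r \<and> has_room lt X (Some y) None r)
     \<and> (\<forall>y\<in>Y. \<forall>y'\<in>Y. lt y y' \<longrightarrow> has_room lt X (Some y) (Some y') r)"

lemma spaced_subset: "spaced lt X Y r \<Longrightarrow> Y \<subseteq> X"
  unfolding spaced_def by blast

lemma spaced_Union_chain:
  assumes C: "C \<subseteq> {Y. spaced lt X Y r}" and chain: "chain\<^sub>\<subseteq> C"
  shows "spaced lt X (\<Union>C) r"
  unfolding spaced_def
proof (intro conjI ballI impI)
  show "\<Union>C \<subseteq> X"
    using C unfolding spaced_def by blast
  fix y assume "y \<in> \<Union>C"
  then show "has_room lt X None (Some y) r" "has_room lt X (Some y) None r"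
    using C unfolding spaced_def by blast+
  fix y' assume "y' \<in> \<Union>C" "lt y y'"
  then obtain Y Y' where "Y \<in> C" "Y' \<in> C" "y \<in> Y" "y' \<in> Y'"
    using \<open>y \<in> \<Union>C\<close> by blast
  moreover have "Y \<subseteq> Y' \<or> Y' \<subseteq> Y"
    using chain \<open>Y \<in> C\<close> \<open>Y' \<in> C\<close> unfolding chain_subset_def by blast
  ultimately show "has_room lt X (Some y) (Some y') r"
    using C \<open>lt y y'\<close> unfolding spaced_def by blast
qed

lemma spaced_insert:
  assumes lin: "strict_linear lt" and Y: "spaced lt X Y r" and x: "x \<in> X"
    and "has_room lt X None (Some x) r" "has_room lt X (Some x) None r"
    and "\<forall>y\<in>Y. lt y x \<longrightarrow> has_room lt X (Some y) (Some x) r"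
    and "\<forall>y\<in>Y. lt x y \<longrightarrow> has_room lt X (Some x) (Some y) r"
  shows "spaced lt X (insert x Y) r"
  using assms strict_linear_irrefl[OF lin, of x] unfolding spaced_def by auto

text \<open>The elements of \<open>X\<close> with fewer than \<open>r\<close> elements of \<open>X\<close> between themselves and
  \<open>lo\<close>; for \<open>lo = None\<close>, between themselves and an end of \<open>X\<close>.\<close>
definition crowded :: "('m \<Rightarrow> 'm \<Rightarrow> bool) \<Rightarrow> 'm set \<Rightarrow> 'm option \<Rightarrow> nat \<Rightarrow> 'm set" where
  "crowded lt X lo r =
     {x \<in> between lt X lo None. \<not> has_room lt X lo (Some x) r}
   \<union> {x \<in> between lt X None lo. \<not> has_room lt X (Some x) lo r}"

lemma finite_crowded: "strict_linear lt \<Longrightarrow> finite (crowded lt X lo r)"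
  unfolding crowded_def using finite_crowded_above finite_crowded_below by blast

lemma maximal_spaced_cover:
  assumes lin: "strict_linear lt" and Y: "spaced lt X Y r"
    and max: "\<forall>Z. spaced lt X Z r \<longrightarrow> Y \<subseteq> Z \<longrightarrow> Z = Y"
  shows "X \<subseteq> crowded lt X None r \<union> (\<Union>y\<in>Y. insert y (crowded lt X (Some y) r))"
proof
  fix x assume x: "x \<in> X"
  show "x \<in> crowded lt X None r \<union> (\<Union>y\<in>Y. insert y (crowded lt X (Some y) r))"
  proof (rule ccontr)
    assume "x \<notin> crowded lt X None r \<union> (\<Union>y\<in>Y. insert y (crowded lt X (Some y) r))"
    then have none: "x \<notin> crowded lt X None r"
      and some: "\<And>y. y \<in> Y \<Longrightarrow> x \<notin> crowded lt X (Some y) r" and "x \<notin> Y"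
      by blast+
    have "x \<in> between lt X None None"
      using x by (simp add: between_def)
    then have ends: "has_room lt X None (Some x) r" "has_room lt X (Some x) None r"
      using none unfolding crowded_def by blast+
    have "has_room lt X (Some y) (Some x) r" if "y \<in> Y" "lt y x" for y
    proof -
      have "x \<in> between lt X (Some y) None"
        using x that(2) by (simp add: between_def)
      then show ?thesis
        using some[OF that(1)] unfolding crowded_def by blast
    qed
    moreover have "has_room lt X (Some x) (Some y) r" if "y \<in> Y" "lt x y" for y
    proof -
      have "x \<in> between lt X None (Some y)"
        using x that(2) by (simp add: between_def)
      then show ?thesis
        using some[OF that(1)] unfolding crowded_def by blast
    qed
    ultimately have "spaced lt X (insert x Y) r"
      using spaced_insert[OF lin Y x ends] by blast
    then show False
      using max \<open>x \<notin> Y\<close> by blast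
  qed
qed

lemma card_of_finite_ordLeq_infinite:
  "finite A \<Longrightarrow> infinite B \<Longrightarrow> ordLeq2 (card_of A) (card_of B)"
  using finite_ordLess_infinite[OF card_of_Well_order card_of_Well_order, of A B]
  by (simp add: Field_card_of ordLess_imp_ordLeq)

lemma card_of_ordLeq_finite_cover:
  assumes infX: "infinite X" and cover: "X \<subseteq> C \<union> (\<Union>y\<in>Y. N y)"
    and finC: "finite C" and finN: "\<forall>y\<in>Y. finite (N y)"
  shows "ordLeq2 (card_of X) (card_of Y)"
proof -
  have infY: "infinite Y"
  proof
    assume "finite Y"
    then have "finite (C \<union> (\<Union>y\<in>Y. N y))"
      using finC finN by simp
    then show False
      using infX cover finite_subset by blast
  qed
  then have "Y \<noteq> {}"
    by auto
  then have "ordLeq2 (card_of X) (card_of (\<Union>y\<in>Y. C \<union> N y))"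
    using cover by (intro card_of_mono1) blast
  moreover have "ordLeq2 (card_of (\<Union>y\<in>Y. C \<union> N y)) (card_of Y)"
    using finC finN infY
    by (intro card_of_UNION_ordLeq_infinite card_of_mono1 ballI card_of_finite_ordLeq_infinite) auto
  ultimately show ?thesis
    by (rule ordLeq_transitive)
qed

lemma exists_spaced:
  assumes lin: "strict_linear lt" and infX: "infinite X"
  shows "\<exists>Y. spaced lt X Y r \<and> ordIso2 (card_of Y) (card_of X)"
proof -
  have "\<forall>C\<in>chains {Y. spaced lt X Y r}. \<Union>C \<in> {Y. spaced lt X Y r}"
    unfolding chains_def using spaced_Union_chain by blast
  then obtain Y where Y: "spaced lt X Y r"
    and max: "\<forall>Z\<in>{Y. spaced lt X Y r}. Y \<subseteq> Z \<longrightarrow> Z = Y"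
    using Zorn_Lemma by blast
  have "X \<subseteq> crowded lt X None r \<union> (\<Union>y\<in>Y. insert y (crowded lt X (Some y) r))"
    using maximal_spaced_cover[OF lin Y] max by blast
  then have "ordLeq2 (card_of X) (card_of Y)"
    using infX finite_crowded[OF lin] by (intro card_of_ordLeq_finite_cover) auto
  moreover have "ordLeq2 (card_of Y) (card_of X)"
    using spaced_subset[OF Y] by (rule card_of_mono1)
  ultimately show ?thesis
    using Y ordIso_iff_ordLeq by blast
qed

lemma exists_spaced_family:
  assumes "strict_linear lt" "\<forall>k\<in>K. infinite (X k)"
  shows "\<exists>Y. \<forall>k\<in>K. spaced lt (X k) (Y k) r \<and> ordIso2 (card_of (Y k)) (card_of (X k))"
proof -
  have "\<forall>k\<in>K. \<exists>Y. spaced lt (X k) Y r \<and> ordIso2 (card_of Y) (card_of (X k))"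
    using exists_spaced[OF assms(1)] assms(2) by blast
  then show ?thesis
    by (rule bchoice)
qed

section \<open>Completing prescribed values to an increasing tuple\<close>

lemma monotone_on_fun_upd_Suc:
  assumes lin: "strict_linear lt" and f: "monotone_on {1..n} (<) lt f"
    and v: "0 < n \<Longrightarrow> lt (f n) v"
  shows "monotone_on {1..Suc n} (<) lt (f(Suc n := v))"
proof (rule monotone_onI)
  fix j j' assume j: "j \<in> {1..Suc n}" "j' \<in> {1..Suc n}" "j < j'"
  show "lt ((f(Suc n := v)) j) ((f(Suc n := v)) j')"
  proof (cases "j' = Suc n")
    case True
    then have "j \<in> {1..n}" "0 < n"
      using j by auto
    moreover have "j < n \<Longrightarrow> lt (f j) (f n)"
      using f \<open>j \<in> {1..n}\<close> \<open>0 < n\<close> by (simp add: monotone_on_def)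
    ultimately show ?thesis
      using True v strict_linear_trans[OF lin] by (cases "j = n") auto
  next
    case False
    then show ?thesis
      using f j by (simp add: monotone_on_def)
  qed
qed

context
  fixes lt :: "'m \<Rightarrow> 'm \<Rightarrow> bool" and X Y :: "'m set" and r :: nat
    and P :: "nat set" and g :: "nat \<Rightarrow> 'm"
  assumes lin: "strict_linear lt" and sp: "spaced lt X Y r"
    and P: "P \<subseteq> {1..r}" and gY: "g ` P \<subseteq> Y" and g: "monotone_on P (<) lt g"
begin

lemma prescribed_in_X: "q \<in> P \<Longrightarrow> g q \<in> X"
  using gY spaced_subset[OF sp] by blast

lemma prescribed_less: "p \<in> P \<Longrightarrow> q \<in> P \<Longrightarrow> p < q \<Longrightarrow> lt (g p) (g q)"
  using g by (rule monotone_onD)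

lemma prescribed_le: "q \<in> P \<Longrightarrow> q \<le> r"
  using P by auto

lemma room_around_prescribed:
  assumes "q \<in> P"
  shows "has_room lt X None (Some (g q)) r" "has_room lt X (Some (g q)) None r"
  using sp assms gY unfolding spaced_def by blast+

lemma room_between_prescribed:
  assumes "p \<in> P" "q \<in> P" "p < q"
  shows "has_room lt X (Some (g p)) (Some (g q)) r"
proof -
  have "g p \<in> Y" "g q \<in> Y"
    using assms(1,2) gY by blast+
  then show ?thesis
    using sp prescribed_less[OF assms] unfolding spaced_def by blast
qed

text \<open>The invariant of the left-to-right filling of positions \<open>1, \<dots>, r\<close>: after position \<open>n\<close>
  has received the value \<open>lo\<close> (\<open>None\<close> for \<open>n = 0\<close>), there is room above \<open>lo\<close> for the
  positions up to \<open>r\<close>, and below each later prescribed value \<open>g q\<close> for the positions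
  before \<open>q\<close>.\<close>
definition fillable :: "nat \<Rightarrow> 'm option \<Rightarrow> bool" where
  "fillable n lo \<longleftrightarrow> has_room lt X lo None (r - n)
     \<and> (\<forall>q\<in>P. n < q \<longrightarrow> has_room lt X lo (Some (g q)) (q - n - 1) \<and> g q \<in> between lt X lo None)"

lemma fillable_prescribed:
  assumes "Suc n \<in> P" "fillable n lo"
  shows "g (Suc n) \<in> between lt X lo None \<and> fillable (Suc n) (Some (g (Suc n)))"
proof -
  have "has_room lt X (Some (g (Suc n))) None (r - Suc n)"
    using room_around_prescribed(2)[OF assms(1)] by (rule has_room_mono) simp
  moreover have "has_room lt X (Some (g (Suc n))) (Some (g q)) (q - Suc n - 1)
      \<and> g q \<in> between lt X (Some (g (Suc n))) None" if "q \<in> P" "Suc n < q" for q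
  proof
    have "q - Suc n - 1 \<le> r"
      using prescribed_le[OF that(1)] by simp
    with room_between_prescribed[OF assms(1) that]
    show "has_room lt X (Some (g (Suc n))) (Some (g q)) (q - Suc n - 1)"
      by (rule has_room_mono)
    show "g q \<in> between lt X (Some (g (Suc n))) None"
      using prescribed_in_X[OF that(1)] prescribed_less[OF assms(1) that] by (simp add: between_def)
  qed
  moreover have "g (Suc n) \<in> between lt X lo None"
    using assms unfolding fillable_def by blast
  ultimately show ?thesis
    unfolding fillable_def by blast
qed

lemma fillable_before_prescribed:
  assumes q: "q \<in> P" "Suc n < q" and q_next: "\<forall>p\<in>P. n < p \<longrightarrow> q \<le> p"
    and fill: "fillable n lo"
  shows "\<exists>v\<in>between lt X lo None. fillable (Suc n) (Some v)"
proof -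
  have "has_room lt X lo (Some (g q)) (q - n - 1)"
    using fill q unfolding fillable_def by simp
  moreover have "q - n - 1 = Suc (q - Suc n - 1)"
    using q(2) by simp
  ultimately obtain v where v: "v \<in> between lt X lo (Some (g q))"
    and room_q: "has_room lt X (Some v) (Some (g q)) (q - Suc n - 1)"
    using has_room_SucD[OF lin] by fastforce
  have v_q: "lt v (g q)" and v_lo: "v \<in> between lt X lo None"
    using v by (simp_all add: between_def)
  have "has_room lt X (Some v) None (r - Suc n)"
    using has_room_lower[OF lin v_q room_around_prescribed(2)[OF q(1)]] by (rule has_room_mono) simp
  moreover have "has_room lt X (Some v) (Some (g p)) (p - Suc n - 1)
      \<and> g p \<in> between lt X (Some v) None" if p: "p \<in> P" "Suc n < p" for p
  proof (cases "p = q")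
    case True
    then show ?thesis
      using room_q v_q prescribed_in_X[OF p(1)] by (simp add: between_def)
  next
    case False
    with q_next p have "q < p"
      by fastforce
    then have gq_gp: "lt (g q) (g p)"
      by (rule prescribed_less[OF q(1) p(1)])
    show ?thesis
    proof
      have "p - Suc n - 1 \<le> r"
        using prescribed_le[OF p(1)] by simp
      with has_room_lower[OF lin v_q room_between_prescribed[OF q(1) p(1) \<open>q < p\<close>]]
      show "has_room lt X (Some v) (Some (g p)) (p - Suc n - 1)"
        by (rule has_room_mono)
      show "g p \<in> between lt X (Some v) None"
        using prescribed_in_X[OF p(1)] strict_linear_trans[OF lin v_q gq_gp] by (simp add: between_def)
    qed
  qed
  ultimately show ?thesis
    using v_lo unfolding fillable_def by blast
qed

lemma fillable_after_prescribed:
  assumes "\<forall>q\<in>P. q \<le> n" "n < r" "fillable n lo"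
  shows "\<exists>v\<in>between lt X lo None. fillable (Suc n) (Some v)"
proof -
  have "has_room lt X lo None (Suc (r - Suc n))"
    using assms(2,3) unfolding fillable_def by (simp add: Suc_diff_Suc)
  then obtain v where "v \<in> between lt X lo None" "has_room lt X (Some v) None (r - Suc n)"
    using has_room_SucD[OF lin] by blast
  moreover have "\<forall>q\<in>P. \<not> Suc n < q"
    using assms(1) by auto
  ultimately show ?thesis
    unfolding fillable_def by blast
qed

lemma fillable_step:
  assumes "n < r" "fillable n lo"
  shows "\<exists>v\<in>between lt X lo None. (Suc n \<in> P \<longrightarrow> v = g (Suc n)) \<and> fillable (Suc n) (Some v)"
proof (cases "\<exists>q\<in>P. n < q")
  case True
  define q where "q = (LEAST q. q \<in> P \<and> n < q)"
  have q: "q \<in> P" "n < q"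
    using LeastI_ex[of "\<lambda>q. q \<in> P \<and> n < q"] True unfolding q_def by blast+
  have q_next: "\<forall>p\<in>P. n < p \<longrightarrow> q \<le> p"
    unfolding q_def by (blast intro: Least_le)
  show ?thesis
  proof (cases "q = Suc n")
    case True
    then show ?thesis
      using fillable_prescribed[OF _ assms(2)] q(1) by blast
  next
    case False
    with q q_next have "Suc n < q" "Suc n \<notin> P"
      by fastforce+
    then show ?thesis
      using fillable_before_prescribed[OF q(1) _ q_next assms(2)] by blast
  qed
next
  case False
  then have "\<forall>q\<in>P. q \<le> n" "Suc n \<notin> P"
    by (auto simp: not_less)
  then show ?thesis
    using fillable_after_prescribed[OF _ assms] by blast
qed

lemma fill_prefix:
  assumes infX: "infinite X"
  shows "n \<le> r \<Longrightarrow> \<exists>f. f ` {1..n} \<subseteq> X \<and> monotone_on {1..n} (<) lt f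
           \<and> (\<forall>j\<in>P. j \<le> n \<longrightarrow> f j = g j) \<and> fillable n (if n = 0 then None else Some (f n))"
proof (induction n)
  case 0
  have "has_room lt X None (Some (g q)) (q - 0 - 1) \<and> g q \<in> between lt X None None"
    if q: "q \<in> P" for q
  proof
    have "q - 0 - 1 \<le> r"
      using prescribed_le[OF q] by simp
    with room_around_prescribed(1)[OF q] show "has_room lt X None (Some (g q)) (q - 0 - 1)"
      by (rule has_room_mono)
    show "g q \<in> between lt X None None"
      using prescribed_in_X[OF q] by (simp add: between_def)
  qed
  then have "fillable 0 None"
    unfolding fillable_def using has_room_unbounded[OF infX] by simp
  then show ?case
    by (intro exI[of _ g]) simp
next
  case (Suc n)
  then obtain f where f: "f ` {1..n} \<subseteq> X" "monotone_on {1..n} (<) lt f"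
      "\<forall>j\<in>P. j \<le> n \<longrightarrow> f j = g j" "fillable n (if n = 0 then None else Some (f n))"
    by auto
  obtain v where v: "v \<in> between lt X (if n = 0 then None else Some (f n)) None"
    and v_g: "Suc n \<in> P \<longrightarrow> v = g (Suc n)" and fill: "fillable (Suc n) (Some v)"
    using fillable_step[OF _ f(4)] Suc.prems by auto
  have "monotone_on {1..Suc n} (<) lt (f(Suc n := v))"
    using v by (intro monotone_on_fun_upd_Suc[OF lin f(2)]) (simp add: between_def)
  moreover have "(f(Suc n := v)) ` {1..Suc n} \<subseteq> X"
    using f(1) v by (auto simp: between_def)
  moreover have "\<forall>j\<in>P. j \<le> Suc n \<longrightarrow> (f(Suc n := v)) j = g j"
    using f(3) v_g by (auto simp: le_Suc_eq)
  moreover have "fillable (Suc n) (if Suc n = 0 then None else Some ((f(Suc n := v)) (Suc n)))"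
    using fill by simp
  ultimately show ?case
    by blast
qed

end

lemma spaced_extend:
  assumes "strict_linear lt" "spaced lt X Y r" "infinite X"
    and "P \<subseteq> {1..r}" "g ` P \<subseteq> Y" "monotone_on P (<) lt g"
  shows "\<exists>f. f ` {1..r} \<subseteq> X \<and> monotone_on {1..r} (<) lt f \<and> (\<forall>j\<in>P. f j = g j)"
proof -
  obtain f where "f ` {1..r} \<subseteq> X" "monotone_on {1..r} (<) lt f" "\<forall>j\<in>P. j \<le> r \<longrightarrow> f j = g j"
    using fill_prefix[OF assms(1,2,4-6,3), of r] by blast
  moreover have "\<forall>j\<in>P. j \<le> r"
    using assms(4) by auto
  ultimately show ?thesis
    by blast
qed

section \<open>Changing the second indices of the constants\<close>

lemma in_prod_iff:
  "in_prod lt r s X a \<longleftrightarrow> (\<forall>k\<in>{1..s}. a k ` {1..r} \<subseteq> X k \<and> monotone_on {1..r} (<) lt (a k))"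
  unfolding in_prod_def monotone_on_def by blast

lemma in_prod_extend:
  assumes lin: "strict_linear lt"
    and X: "\<forall>k\<in>{1..s}. infinite (X k) \<and> spaced lt (X k) (Y k) r"
    and a: "in_prod lt r s Y a"
    and J: "\<forall>k\<in>{1..s}. J k \<subseteq> {1..r}"
    and l: "\<forall>k\<in>{1..s}. l k ` J k \<subseteq> {1..r} \<and> monotone_on (J k) (<) (<) (l k)"
  shows "\<exists>b. in_prod lt r s X b \<and> (\<forall>k\<in>{1..s}. \<forall>j\<in>J k. b k j = a k (l k j))"
proof -
  have "\<forall>k\<in>{1..s}. \<exists>f. f ` {1..r} \<subseteq> X k \<and> monotone_on {1..r} (<) lt f
      \<and> (\<forall>j\<in>J k. f j = a k (l k j))"
  proof
    fix k assume k: "k \<in> {1..s}"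
    have a_k: "a k ` {1..r} \<subseteq> Y k" "monotone_on {1..r} (<) lt (a k)"
      using a k unfolding in_prod_iff by blast+
    have l_k: "l k ` J k \<subseteq> {1..r}" "monotone_on (J k) (<) (<) (l k)"
      using l k by blast+
    have img: "(a k \<circ> l k) ` J k \<subseteq> Y k"
      using a_k(1) l_k(1) by (auto simp: image_subset_iff)
    have mono: "monotone_on (J k) (<) lt (a k \<circ> l k)"
      using a_k(2) l_k(2,1) by (rule monotone_on_o)
    have sp: "spaced lt (X k) (Y k) r" and inf: "infinite (X k)"
      using X k by blast+
    obtain f where "f ` {1..r} \<subseteq> X k" "monotone_on {1..r} (<) lt f"
        "\<forall>j\<in>J k. f j = (a k \<circ> l k) j"
      using spaced_extend[OF lin sp inf J[rule_format, OF k] img mono] by blast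
    then show "\<exists>f. f ` {1..r} \<subseteq> X k \<and> monotone_on {1..r} (<) lt f
        \<and> (\<forall>j\<in>J k. f j = a k (l k j))"
      by (intro exI[of _ f]) simp
  qed
  then have "\<exists>b. \<forall>k\<in>{1..s}. b k ` {1..r} \<subseteq> X k \<and> monotone_on {1..r} (<) lt (b k)
      \<and> (\<forall>j\<in>J k. b k j = a k (l k j))"
    by (rule bchoice)
  then obtain b where "\<forall>k\<in>{1..s}. b k ` {1..r} \<subseteq> X k \<and> monotone_on {1..r} (<) lt (b k)
      \<and> (\<forall>j\<in>J k. b k j = a k (l k j))"
    by blast
  then show ?thesis
    unfolding in_prod_iff by blast
qed

lemma sorted_wrt_lex_less_distinct: "sorted_wrt lex_less cs \<Longrightarrow> distinct cs"
  by (induction cs) (auto simp: lex_less_def)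

lemma sorted_lex_reindex:
  assumes cs: "sorted_wrt lex_less cs" and len: "length ls = length cs"
    and ls: "sorted_wrt lex_less (zip (map fst cs) ls)"
  shows "monotone_on {j. (k, j) \<in> set cs} (<) (<) (\<lambda>j. the (map_of (zip cs ls) (k, j)))"
proof (rule monotone_onI)
  fix j j' assume "j \<in> {j. (k, j) \<in> set cs}" "j' \<in> {j. (k, j) \<in> set cs}" "j < j'"
  then obtain p p' where p: "p < length cs" "cs ! p = (k, j)" and p': "p' < length cs" "cs ! p' = (k, j')"
    by (auto simp: in_set_conv_nth)
  have "p < p'"
    using sorted_wrt_nth_less[OF cs, of p' p] p p' \<open>j < j'\<close>
    by (cases p p' rule: linorder_cases) (auto simp: lex_less_def)
  then have "ls ! p < ls ! p'"
    using sorted_wrt_nth_less[OF ls, of p p'] p p' len by (simp add: lex_less_def)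
  moreover have "map_of (zip cs ls) (cs ! i) = Some (ls ! i)" if "i < length cs" for i
    using map_of_zip_nth[OF len[symmetric] sorted_wrt_lex_less_distinct[OF cs]] that len by simp
  ultimately show "the (map_of (zip cs ls) (k, j)) < the (map_of (zip cs ls) (k, j'))"
    using p p' by (metis option.sel)
qed

lemma in_prod_reindex:
  assumes lin: "strict_linear lt"
    and X: "\<forall>k\<in>{1..s}. infinite (X k) \<and> spaced lt (X k) (Y k) r"
    and cs: "sorted_wrt lex_less cs" and cs_range: "\<forall>(i, j)\<in>set cs. 1 \<le> i \<and> i \<le> s \<and> 1 \<le> j \<and> j \<le> r"
    and a: "in_prod lt r s Y a" and len: "length ls = length cs"
    and ls_sorted: "sorted_wrt lex_less (zip (map fst cs) ls)" and ls_range: "\<forall>l\<in>set ls. 1 \<le> l \<and> l \<le> r"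
  shows "\<exists>b. in_prod lt r s X b \<and> map (\<lambda>(i, j). b i j) cs = map (\<lambda>(k, l). a k l) (zip (map fst cs) ls)"
proof -
  define l where "l k j = the (map_of (zip cs ls) (k, j))" for k j
  have l_nth: "l k j = ls ! p" if "p < length cs" "cs ! p = (k, j)" for p k j
    using map_of_zip_nth[OF len[symmetric] sorted_wrt_lex_less_distinct[OF cs]] that len
    unfolding l_def by (metis option.sel)
  have "l k j \<in> {1..r}" if "(k, j) \<in> set cs" for k j
  proof -
    obtain p where p: "p < length cs" "cs ! p = (k, j)"
      using \<open>(k, j) \<in> set cs\<close> unfolding in_set_conv_nth by blast
    then have "ls ! p \<in> set ls"
      using len by simp
    then show ?thesis
      using l_nth[OF p] ls_range by simp
  qed
  moreover have "monotone_on {j. (k, j) \<in> set cs} (<) (<) (l k)" for k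
    unfolding l_def using sorted_lex_reindex[OF cs len ls_sorted] .
  moreover have "\<forall>k\<in>{1..s}. {j. (k, j) \<in> set cs} \<subseteq> {1..r}"
    using cs_range by auto
  ultimately obtain b where b: "in_prod lt r s X b"
      and b_a: "\<forall>k\<in>{1..s}. \<forall>j\<in>{j. (k, j) \<in> set cs}. b k j = a k (l k j)"
    using in_prod_extend[OF lin X a, of "\<lambda>k. {j. (k, j) \<in> set cs}" l] by blast
  have "map (\<lambda>(i, j). b i j) cs = map (\<lambda>(k, l). a k l) (zip (map fst cs) ls)"
  proof (rule nth_equalityI)
    fix p assume "p < length (map (\<lambda>(i, j). b i j) cs)"
    then have p: "p < length cs"
      by simp
    obtain k j where kj: "cs ! p = (k, j)"
      by fastforce
    then have "(k, j) \<in> set cs"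
      using p nth_mem by metis
    moreover have "k \<in> {1..s}"
      using cs_range calculation by auto
    ultimately have "b k j = a k (ls ! p)"
      using b_a l_nth[OF p kj] by simp
    then show "map (\<lambda>(i, j). b i j) cs ! p = map (\<lambda>(k, l). a k l) (zip (map fst cs) ls) ! p"
      using p kj len by simp
  qed (simp add: len)
  then show ?thesis
    using b by blast
qed

lemma infinite_if_card_of_ordIso:
  "Card_order \<kappa> \<Longrightarrow> infinite (Field \<kappa>) \<Longrightarrow> ordIso2 (card_of A) \<kappa> \<Longrightarrow> infinite A"
  using card_of_ordIso_finite_Field ordIso_symmetric by blast

theorem lemma3p3:
  fixes fs :: "'f \<Rightarrow> 'm list \<Rightarrow> 'm" and rs :: "'p \<Rightarrow> 'm list \<Rightarrow> bool" and lsym :: 'p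
    and sk :: "nat \<Rightarrow> ('f, 'p, 'm) fm \<Rightarrow> 'f" and Mc :: "'o::wellorder \<Rightarrow> 'm set"
    and \<sigma> :: "('f, 'p, 'm) fm" and cs :: "(nat \<times> nat) list"
    and r s :: nat and \<kappa> :: "nat \<Rightarrow> 'k rel" and \<beta> :: "nat \<Rightarrow> 'o" and X :: "nat \<Rightarrow> 'm set"
  assumes setting: "standing_setting fs rs lsym sk Mc"
    and sentence: "fv \<sigma> = {}"
    and cs_all: "set cs = fm_cc \<sigma>"
    and cs_sorted: "sorted_wrt lex_less cs"
    and rs_pos: "1 \<le> r" "1 \<le> s"
    and cs_range: "\<forall>(i, j)\<in>set cs. 1 \<le> i \<and> i \<le> s \<and> 1 \<le> j \<and> j \<le> r"
    and kappa: "\<forall>k\<in>{1..s}. Card_order (\<kappa> k) \<and> \<not> finite (Field (\<kappa> k))"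
    and beta: "\<forall>k\<in>{1..s}. \<forall>k'\<in>{1..s}. k < k' \<longrightarrow> \<beta> k < \<beta> k'"
    and X_sub: "\<forall>k\<in>{1..s}. X k \<subseteq> {a. Fidx Mc a = \<beta> k}"
    and X_card: "\<forall>k\<in>{1..s}. ordIso2 (card_of (X k)) (\<kappa> k)"
    and hyp: "\<forall>a. in_prod (\<lambda>x y. rs lsym [x, y]) r s X a \<longrightarrow>
                 models fs rs (inst \<sigma> cs (map (\<lambda>(i, j). a i j) cs))"
  shows "\<exists>Y. (\<forall>k\<in>{1..s}. Y k \<subseteq> X k \<and> ordIso2 (card_of (Y k)) (\<kappa> k))
           \<and> (\<forall>a. in_prod (\<lambda>x y. rs lsym [x, y]) r s Y a \<longrightarrow>
                (\<forall>ls. length ls = length cs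
                   \<and> sorted_wrt lex_less (zip (map fst cs) ls)
                   \<and> (\<forall>l\<in>set ls. 1 \<le> l \<and> l \<le> r)
                   \<longrightarrow> models fs rs (inst \<sigma> cs (map (\<lambda>(k, l). a k l) (zip (map fst cs) ls)))))"
proof -
  let ?lt = "\<lambda>x y. rs lsym [x, y]"
  have lin: "strict_linear ?lt"
    using setting by (simp add: standing_setting_def)
  have infX: "\<forall>k\<in>{1..s}. infinite (X k)"
    using kappa X_card infinite_if_card_of_ordIso by blast
  obtain Y where Y: "\<forall>k\<in>{1..s}. spaced ?lt (X k) (Y k) r \<and> ordIso2 (card_of (Y k)) (card_of (X k))"
    using exists_spaced_family[OF lin infX] by blast
  have "Y k \<subseteq> X k \<and> ordIso2 (card_of (Y k)) (\<kappa> k)" if "k \<in> {1..s}" for k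
    using Y X_card that spaced_subset ordIso_transitive by blast
  moreover have "models fs rs (inst \<sigma> cs (map (\<lambda>(k, l). a k l) (zip (map fst cs) ls)))"
    if tuple: "in_prod ?lt r s Y a" "length ls = length cs" "sorted_wrt lex_less (zip (map fst cs) ls)"
      "\<forall>l\<in>set ls. 1 \<le> l \<and> l \<le> r" for a ls
  proof -
    have XY: "\<forall>k\<in>{1..s}. infinite (X k) \<and> spaced ?lt (X k) (Y k) r"
      using infX Y by blast
    obtain b where "in_prod ?lt r s X b"
        "map (\<lambda>(i, j). b i j) cs = map (\<lambda>(k, l). a k l) (zip (map fst cs) ls)"
      using in_prod_reindex[OF lin XY cs_sorted cs_range tuple] by blast
    with hyp show ?thesis
      by metis
  qed
  ultimately show ?thesis
    by blast
qed

end
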